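(* Let $D$ be the commutative unital ring of diagonal $2\times2$ matrices with entries in $\mathbb{Z}/2\mathbb{Z}$, and let $B=\begin{pmatrix}1&0\\0&0\end{pmatrix}$, $C=\begin{pmatrix}0&0\\0&1\end{pmatrix}$. The irreducible $\lambda$-quiddities over $D$ are exactly, up to cyclic permutation: - $(\mathrm{Id},\mathrm{Id},\mathrm{Id})$; - $(B,C,B,C)$, $(B,0,B,0)$, $(C,0,C,0)$, $(0,0,0,0)$; - $(B,B,B,B,B,B)$ and $(C,C,C,C,C,C)$.
   Context: For $a_1,\ldots,a_n$ in a commutative unital ring $A$ (with unit $1$), $M_n(a_1,\ldots,a_n)=\begin{pmatrix}a_n&-1\\1&0\end{pmatrix}\cdots\begin{pmatrix}a_1&-1\\1&0\end{pmatrix}$ (a $2\times2$ matrix over $A$). An $n$-tuple $(a_1,\ldots,a_n)\in A^n$ is a $\lambda$-quiddity over $A$ if $M_n(a_1,\ldots,a_n)=\pm\mathrm{Id}$. For $(a_1,\ldots,a_n)\in A^n$, $(b_1,\ldots,b_m)\in A^m$, define $(a_1,\ldots,a_n)\oplus(b_1,\ldots,b_m)=(a_1+b_m,a_2,\ldots,a_{n-1},a_n+b_1,b_2,\ldots,b_{m-1})$. Write $(a_1,\ldots,a_n)\sim(b_1,\ldots,b_n)$ if $(b_1,\ldots,b_n)$ is obtained from $(a_1,\ldots,a_n)$ or from $(a_n,\ldots,a_1)$ by a cyclic permutation. A $\lambda$-quiddity $(c_1,\ldots,c_n)$ with $n\ge3$ is reducible if there exist a $\lambda$-quiddity $(b_1,\ldots,b_l)$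 and a tuple $(a_1,\ldots,a_m)$ with $l,m\ge3$ and $(c_1,\ldots,c_n)\sim(a_1,\ldots,a_m)\oplus(b_1,\ldots,b_l)$; it is irreducible otherwise (by convention $(0,0)$ is reducible). *)

theory Defs
  imports "HOL-Analysis.Analysis" "HOL-Library.Z2"
begin

text \<open>2x2 matrices over a commutative unital ring, as tuples (a11, a12, a21, a22).\<close>
type_synonym 'a mat2 = "'a \<times> 'a \<times> 'a \<times> 'a"

fun mmul2 :: "'a::comm_ring_1 mat2 \<Rightarrow> 'a mat2 \<Rightarrow> 'a mat2" where
  "mmul2 (a, b, c, d) (e, f, g, h) = (a*e + b*g, a*f + b*h, c*e + d*g, c*f + d*h)"

definition id2 :: "'a::comm_ring_1 mat2" where
  "id2 = (1, 0, 0, 1)"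

definition negid2 :: "'a::comm_ring_1 mat2" where
  "negid2 = (-1, 0, 0, -1)"

definition elem2 :: "'a::comm_ring_1 \<Rightarrow> 'a mat2" where
  "elem2 a = (a, -1, 1, 0)"

text \<open>M_n(a_1,...,a_n) = elem a_n * ... * elem a_1\<close>
definition Mq :: "'a::comm_ring_1 list \<Rightarrow> 'a mat2" where
  "Mq xs = foldl (\<lambda>M a. mmul2 (elem2 a) M) id2 xs"

definition lambda_quiddity :: "'a::comm_ring_1 list \<Rightarrow> bool" where
  "lambda_quiddity xs \<longleftrightarrow> Mq xs = id2 \<or> Mq xs = negid2"

text \<open>(a_1..a_n) \<oplus> (b_1..b_m) = (a_1+b_m, a_2, ..., a_{n-1}, a_n+b_1, b_2, ..., b_{m-1})\<close>
definition qsum :: "'a::comm_ring_1 list \<Rightarrow> 'a list \<Rightarrow> 'a list" where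
  "qsum as bs = [hd as + last bs] @ butlast (tl as) @ [last as + hd bs] @ butlast (tl bs)"

definition qsim :: "'a list \<Rightarrow> 'a list \<Rightarrow> bool" where
  "qsim xs ys \<longleftrightarrow> (\<exists>k. ys = rotate k xs \<or> ys = rotate k (rev xs))"

definition reducible_q :: "'a::comm_ring_1 list \<Rightarrow> bool" where
  "reducible_q cs \<longleftrightarrow> (\<exists>as bs. lambda_quiddity bs \<and> length bs \<ge> 3 \<and> length as \<ge> 3
      \<and> qsim cs (qsum as bs))"

definition irreducible_q :: "'a::comm_ring_1 list \<Rightarrow> bool" where
  "irreducible_q cs \<longleftrightarrow> lambda_quiddity cs \<and> length cs \<ge> 3 \<and> \<not> reducible_q cs"

text \<open>The ring D of diagonal 2x2 matrices over Z/2Z, represented by their diagonal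
  (componentwise operations), and the elements B = diag(1,0), C = diag(0,1).\<close>
type_synonym D = "bit ^ 2"

definition Bd :: D where "Bd = (\<chi> i. if i = 1 then 1 else 0)"
definition Cd :: D where "Cd = (\<chi> i. if i = 1 then 0 else 1)"

end

theory Submission
  imports Defs
begin

text \<open>Peeling off a \<lambda>-quiddity \<open>(b\<^sub>1, w, b\<^sub>l)\<close> under \<open>\<oplus>\<close> leaves \<open>w\<close>
  as a block of consecutive entries whose matrix has top-left corner \<open>\<plusminus>1\<close>; conversely,
  by the determinant condition, every such block extends to a \<lambda>-quiddity. Reducibility is thus
  detected by cyclic windows. Over \<open>D\<close> a window \<open>(1)\<close> or a window \<open>(x, y)\<close> with
  \<open>x y = 0\<close> has corner \<open>1\<close>, so an irreducible quiddity of length at least \<open>5\<close> is constant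
  \<open>B\<close> or \<open>C\<close>, and four equal entries \<open>B\<close> (resp. \<open>C\<close>) already form a window with corner
  \<open>1\<close>. Lengths \<open>3\<close> and \<open>4\<close> are settled by enumeration, and irreducibility of the listed
  tuples by checking all windows of all their rotations and reversals.\<close>

lemma mmul2_assoc: "mmul2 (mmul2 A B) C = mmul2 A (mmul2 B C)"
  by (cases A; cases B; cases C) (simp add: algebra_simps)

lemma mmul2_id2_left [simp]: "mmul2 id2 A = A"
  by (cases A) (simp add: id2_def)

lemma Mq_Nil [simp]: "Mq [] = id2"
  by (simp add: Mq_def)

lemma Mq_snoc: "Mq (xs @ [x]) = mmul2 (elem2 x) (Mq xs)"
  by (simp add: Mq_def)

lemma Mq_append: "Mq (xs @ ys) = mmul2 (Mq ys) (Mq xs)"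
  by (induction ys rule: rev_induct) (simp_all add: Mq_snoc mmul2_assoc flip: append_assoc)

lemma Mq_single: "Mq [a] = elem2 a"
  using Mq_snoc[of "[]" a] by (cases "elem2 a") (simp add: id2_def)

fun det2 :: "'a::comm_ring_1 mat2 \<Rightarrow> 'a" where
  "det2 (a, b, c, d) = a * d - b * c"

lemma det2_mmul2: "det2 (mmul2 A B) = det2 A * det2 B"
  by (cases A; cases B) (simp add: algebra_simps)

lemma det2_Mq: "det2 (Mq xs) = 1"
proof (induction xs rule: rev_induct)
  case (snoc x xs)
  then show ?case by (simp add: Mq_snoc det2_mmul2 elem2_def)
qed (simp add: id2_def)

definition corner_split :: "'a::comm_ring_1 list \<Rightarrow> bool" where
  "corner_split z \<longleftrightarrow>
     (\<exists>u w. z = u @ w \<and> length u \<ge> 3 \<and> w \<noteq> [] \<and> (fst (Mq w) = 1 \<or> fst (Mq w) = -1))"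

lemma lambda_quiddity_corner:
  assumes "lambda_quiddity (a # w @ [b])"
  shows "fst (Mq w) = 1 \<or> fst (Mq w) = -1"
proof -
  obtain p q r s where M: "Mq w = (p, q, r, s)" by (cases "Mq w")
  have "Mq (a # w @ [b]) = mmul2 (elem2 b) (mmul2 (Mq w) (elem2 a))"
    using Mq_append[of "[a] @ w" "[b]"] Mq_append[of "[a]" w] by (simp add: Mq_single)
  then have "snd (snd (snd (Mq (a # w @ [b])))) = - p"
    using M by (simp add: elem2_def)
  with assms M show ?thesis
    by (auto simp: lambda_quiddity_def id2_def negid2_def) (metis minus_minus)+
qed

text \<open>With \<open>Mq w = (p, q, r, s)\<close> and \<open>p\<^sup>2 = 1\<close>, the ends \<open>-p q\<close> and \<open>p r\<close> clear the
  off-diagonal entries, and \<open>p s - q r = 1\<close> makes the product \<open>-p\<close> times the identity.\<close>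
lemma lambda_quiddity_extend_corner:
  assumes "fst (Mq w) = 1 \<or> fst (Mq w) = -1"
  obtains a b where "lambda_quiddity (a # w @ [b])"
proof -
  obtain p q r s where M: "Mq w = (p, q, r, s)" by (cases "Mq w")
  then have p: "p = 1 \<or> p = -1" using assms by simp
  have pp: "p * p = 1" using p by auto
  have "det2 (Mq w) = 1" by (rule det2_Mq)
  then have s: "p * s = 1 + q * r" using M by (simp add: algebra_simps)
  have "s = p * (p * s)" using pp by (simp add: mult.assoc[symmetric])
  then have s': "s = p + p * q * r" using s by (simp add: algebra_simps)
  have "Mq ((- p * q) # w @ [p * r]) = mmul2 (elem2 (p * r)) (mmul2 (Mq w) (elem2 (- p * q)))"
    using Mq_append[of "[- p * q] @ w" "[p * r]"] Mq_append[of "[- p * q]" w]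
    by (simp add: Mq_single)
  also have "\<dots> = (- p, 0, 0, - p)"
    using M s' pp by (simp add: elem2_def algebra_simps) (simp add: mult.assoc[symmetric])
  finally have "lambda_quiddity ((- p * q) # w @ [p * r])"
    using p by (auto simp: lambda_quiddity_def id2_def negid2_def)
  then show thesis by (rule that)
qed

lemma corner_split_iff_qsum:
  "corner_split z \<longleftrightarrow>
     (\<exists>as bs. lambda_quiddity bs \<and> length bs \<ge> 3 \<and> length as \<ge> 3 \<and> qsum as bs = z)"
proof
  assume "corner_split z"
  then obtain u w where z: "z = u @ w" and u: "length u \<ge> 3" and w: "w \<noteq> []"
    and corner: "fst (Mq w) = 1 \<or> fst (Mq w) = -1"
    unfolding corner_split_def by blast
  obtain a b where bs: "lambda_quiddity (a # w @ [b])"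
    using lambda_quiddity_extend_corner[OF corner] by blast
  define as where "as = (hd u - b) # butlast (tl u) @ [last u - a]"
  have u_eq: "hd u # butlast (tl u) @ [last u] = u"
    using u by (cases u; cases "tl u") auto
  have "qsum as (a # w @ [b]) = (hd u # butlast (tl u) @ [last u]) @ w"
    using w by (simp add: qsum_def as_def)
  then have "qsum as (a # w @ [b]) = z"
    by (simp only: u_eq z)
  moreover have "length as \<ge> 3" "length (a # w @ [b]) \<ge> 3"
    using u w by (auto simp: as_def Suc_le_eq)
  ultimately show "\<exists>as bs. lambda_quiddity bs \<and> length bs \<ge> 3 \<and> length as \<ge> 3 \<and> qsum as bs = z"
    using bs by blast
next
  assume "\<exists>as bs. lambda_quiddity bs \<and> length bs \<ge> 3 \<and> length as \<ge> 3 \<and> qsum as bs = z"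
  then obtain as bs where bs: "lambda_quiddity bs" "length bs \<ge> 3" and as: "length as \<ge> 3"
    and z: "qsum as bs = z" by blast
  define w where "w = butlast (tl bs)"
  have "hd bs # w @ [last bs] = bs"
    using bs(2) unfolding w_def by (cases bs; cases "tl bs") auto
  then have "fst (Mq w) = 1 \<or> fst (Mq w) = -1"
    using bs(1) lambda_quiddity_corner by metis
  moreover have "([hd as + last bs] @ butlast (tl as) @ [last as + hd bs]) @ w = z"
    by (simp add: z[symmetric] qsum_def w_def)
  moreover have "w \<noteq> []"
    using bs(2) by (simp add: w_def flip: length_greater_0_conv)
  moreover have "length ([hd as + last bs] @ butlast (tl as) @ [last as + hd bs]) \<ge> 3"
    using as by simp
  ultimately show "corner_split z"
    unfolding corner_split_def by blast
qed

lemma reducible_q_iff_corner_split: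
  "reducible_q c \<longleftrightarrow> (\<exists>k. corner_split (rotate k c) \<or> corner_split (rotate k (rev c)))"
  unfolding reducible_q_def qsim_def corner_split_iff_qsum by blast

lemma corner_split_iff_drop:
  fixes z :: "'a::comm_ring_1 list"
  shows "corner_split z \<longleftrightarrow>
    (\<exists>j \<in> set [3..<length z]. fst (Mq (drop j z)) = 1 \<or> fst (Mq (drop j z)) = -1)"
  unfolding corner_split_def
proof
  assume "\<exists>u w. z = u @ w \<and> 3 \<le> length u \<and> w \<noteq> [] \<and> (fst (Mq w) = 1 \<or> fst (Mq w) = -1)"
  then obtain u w where "z = u @ w" "3 \<le> length u" "w \<noteq> []" "fst (Mq w) = 1 \<or> fst (Mq w) = -1"
    by blast
  then show "\<exists>j \<in> set [3..<length z]. fst (Mq (drop j z)) = 1 \<or> fst (Mq (drop j z)) = -1"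
    by (intro bexI[of _ "length u"]) auto
next
  assume "\<exists>j \<in> set [3..<length z]. fst (Mq (drop j z)) = 1 \<or> fst (Mq (drop j z)) = -1"
  then obtain j where "3 \<le> j" "j < length z" "fst (Mq (drop j z)) = 1 \<or> fst (Mq (drop j z)) = -1"
    by auto
  then show "\<exists>u w. z = u @ w \<and> 3 \<le> length u \<and> w \<noteq> [] \<and> (fst (Mq w) = 1 \<or> fst (Mq w) = -1)"
    by (intro exI[of _ "take j z"] exI[of _ "drop j z"]) auto
qed

lemma rotate_window:
  assumes "i + m \<le> length c"
  shows "rotate (i + m) c = (drop (i + m) c @ take i c) @ take m (drop i c)"
proof -
  have "rotate (i + m) c = drop (i + m) c @ take (i + m) c"
    using assms by (cases "i + m = length c") (simp_all add: rotate_drop_take)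
  then show ?thesis by (simp add: take_add)
qed

lemma irreducible_q_window:
  assumes "irreducible_q c" "i + m \<le> length c" "0 < m" "m + 3 \<le> length c"
  shows "fst (Mq (take m (drop i c))) \<noteq> 1 \<and> fst (Mq (take m (drop i c))) \<noteq> -1"
proof -
  have "\<not> corner_split (rotate (i + m) c)"
    using assms(1) unfolding irreducible_q_def reducible_q_iff_corner_split by blast
  moreover have "length (drop (i + m) c @ take i c) \<ge> 3" "take m (drop i c) \<noteq> []"
    using assms(2-4) by auto
  ultimately show ?thesis
    unfolding corner_split_def rotate_window[OF assms(2)] by blast
qed

lemma irreducible_q_entry:
  assumes "irreducible_q c" "length c \<ge> 4" "i < length c"
  shows "c ! i \<noteq> 1 \<and> c ! i \<noteq> -1"
  using irreducible_q_window[OF assms(1), of i 1] assms(2,3)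
  by (simp add: take_Suc_conv_app_nth Mq_single elem2_def)

lemma irreducible_q_adjacent:
  assumes "irreducible_q c" "length c \<ge> 5" "Suc i < length c"
  shows "c ! Suc i * c ! i \<noteq> 0"
  using irreducible_q_window[OF assms(1), of i 2] assms(2,3)
  by (simp add: numeral_2_eq_2 take_Suc_conv_app_nth Mq_def elem2_def id2_def)

lemma D_eq_iff: "(x::D) = y \<longleftrightarrow> x $ 1 = y $ 1 \<and> x $ 2 = y $ 2"
  by (auto simp: vec_eq_iff forall_2)

lemma Bd_Cd_nth [simp]: "Bd $ 1 = 1" "Bd $ 2 = 0" "Cd $ 1 = 0" "Cd $ 2 = 1"
  by (auto simp: Bd_def Cd_def)

lemma D_uminus [simp]: "- (x::D) = x"
  by (simp add: D_eq_iff)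

lemma D_diff [simp]: "x - (y::D) = x + y"
  by (simp add: diff_conv_add_uminus)

lemma D_numeral [simp]: "(2::D) = 0" "(3::D) = 1"
  by (simp_all add: D_eq_iff)

lemma D_table [simp]:
  "Bd * Bd = Bd" "Cd * Cd = Cd" "Bd * Cd = 0" "Cd * Bd = 0"
  "Bd + Bd = 0" "Cd + Cd = 0" "Bd + Cd = 1" "Cd + Bd = 1" "1 + 1 = (0::D)"
  "1 + Bd = Cd" "Bd + 1 = Cd" "1 + Cd = Bd" "Cd + 1 = Bd"
  "Bd \<noteq> 0" "Bd \<noteq> 1" "Cd \<noteq> 0" "Cd \<noteq> 1" "Bd \<noteq> Cd" "(0::D) \<noteq> 1"
  "0 \<noteq> Bd" "1 \<noteq> Bd" "0 \<noteq> Cd" "1 \<noteq> Cd" "Cd \<noteq> Bd" "(1::D) \<noteq> 0"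
  by (simp_all add: D_eq_iff)

lemma D_cases: "(x::D) = 0 \<or> x = 1 \<or> x = Bd \<or> x = Cd"
proof -
  have "x $ 1 = 0 \<or> x $ 1 = 1" "x $ 2 = 0 \<or> x $ 2 = 1"
    by (cases "x $ 1"; simp) (cases "x $ 2"; simp)
  then show ?thesis unfolding D_eq_iff by fastforce
qed

definition D_irreducibles :: "D list set" where
  "D_irreducibles =
     {[1, 1, 1], [Bd, Cd, Bd, Cd], [Cd, Bd, Cd, Bd], [Bd, 0, Bd, 0], [0, Bd, 0, Bd],
      [Cd, 0, Cd, 0], [0, Cd, 0, Cd], [0, 0, 0, 0], [Bd, Bd, Bd, Bd, Bd, Bd], [Cd, Cd, Cd, Cd, Cd, Cd]}"

lemma rotate_in_D_irreducibles: "z \<in> D_irreducibles \<Longrightarrow> rotate k z \<in> D_irreducibles"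
proof (induction k)
  case (Suc k)
  then show ?case by (auto simp: D_irreducibles_def)
qed simp

lemma D_irreducibles_no_corner_split: "z \<in> D_irreducibles \<Longrightarrow> \<not> corner_split z"
  unfolding D_irreducibles_def
  by (elim insertE emptyE; simp add: corner_split_iff_drop upt_rec Mq_def id2_def elem2_def)

lemma irreducible_q_D_irreducibles:
  assumes "c \<in> D_irreducibles"
  shows "irreducible_q c"
proof -
  have "lambda_quiddity c" "length c \<ge> 3"
    using assms unfolding D_irreducibles_def
    by (elim insertE emptyE; simp add: lambda_quiddity_def Mq_def id2_def negid2_def elem2_def)+
  moreover have "rev c \<in> D_irreducibles"
    using assms by (auto simp: D_irreducibles_def)
  with assms have "\<not> reducible_q c"
    using D_irreducibles_no_corner_split rotate_in_D_irreducibles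
    unfolding reducible_q_iff_corner_split by blast
  ultimately show ?thesis by (simp add: irreducible_q_def)
qed

lemma irreducible_q_D_constant:
  fixes c :: "D list"
  assumes "irreducible_q c" "length c \<ge> 5"
  obtains x where "x = Bd \<or> x = Cd" "c = replicate (length c) x"
proof -
  have step: "c ! Suc i = c ! i \<and> c ! i \<noteq> 0 \<and> c ! i \<noteq> 1" if "Suc i < length c" for i
    using irreducible_q_entry[OF assms(1), of i] irreducible_q_entry[OF assms(1), of "Suc i"]
      irreducible_q_adjacent[OF assms, of i] D_cases[of "c ! i"] D_cases[of "c ! Suc i"]
      assms(2) that by auto
  have const: "c ! i = c ! 0" if "i < length c" for i
    using that by (induction i) (simp_all add: step)
  have "c = replicate (length c) (c ! 0)"
    by (rule nth_equalityI) (simp_all add: const)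
  moreover have "c ! 0 = Bd \<or> c ! 0 = Cd"
    using step[of 0] assms(2) D_cases[of "c ! 0"] by auto
  ultimately show thesis using that by blast
qed

lemma D_irreducibles_of_irreducible_q:
  fixes c :: "D list"
  assumes irr: "irreducible_q c"
  shows "c \<in> D_irreducibles"
proof -
  have lq: "lambda_quiddity c" and len: "length c \<ge> 3"
    using irr by (simp_all add: irreducible_q_def)
  consider "length c = 3" | "length c = 4" | "length c \<ge> 5" using len by linarith
  then show ?thesis
  proof cases
    case 1
    then obtain x y z where c: "c = [x, y, z]" by (auto simp: length_Suc_conv numeral_eq_Suc)
    show ?thesis using lq D_cases[of x] D_cases[of y] D_cases[of z] unfolding c
      by (elim disjE) (simp_all add: D_irreducibles_def lambda_quiddity_def Mq_def id2_def
          negid2_def elem2_def)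
  next
    case 2
    then obtain x y z t where c: "c = [x, y, z, t]" by (auto simp: length_Suc_conv numeral_eq_Suc)
    have "x \<noteq> 1" "y \<noteq> 1" "z \<noteq> 1" "t \<noteq> 1"
      using irreducible_q_entry[OF irr, of 0] irreducible_q_entry[OF irr, of 1]
        irreducible_q_entry[OF irr, of 2] irreducible_q_entry[OF irr, of 3] 2 c by auto
    then show ?thesis using lq D_cases[of x] D_cases[of y] D_cases[of z] D_cases[of t] unfolding c
      by (elim disjE) (simp_all add: D_irreducibles_def lambda_quiddity_def Mq_def id2_def
          negid2_def elem2_def)
  next
    case 3
    then obtain x where x: "x = Bd \<or> x = Cd" and c: "c = replicate (length c) x"
      using irreducible_q_D_constant[OF irr] by blast
    have "length c < 7"
    proof (rule ccontr)
      assume long: "\<not> length c < 7"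
      then have "fst (Mq (take 4 (drop 0 c))) \<noteq> 1"
        using irreducible_q_window[OF irr, of 0 4] by simp
      moreover have "take 4 (drop 0 c) = replicate 4 x"
        using long by (subst c) (simp add: min_def)
      ultimately show False
        using x by (auto simp: Mq_def id2_def elem2_def numeral_eq_Suc)
    qed
    then consider "length c = 5" | "length c = 6" using 3 by linarith
    then show ?thesis
    proof cases
      case 1
      then show ?thesis using lq x c
        by (auto simp: lambda_quiddity_def Mq_def id2_def negid2_def elem2_def numeral_eq_Suc)
    next
      case 2
      then show ?thesis using x c by (auto simp: D_irreducibles_def numeral_eq_Suc)
    qed
  qed
qed

theorem proposition3p6:
  fixes c :: "D list"
  shows "irreducible_q c \<longleftrightarrow>
    (\<exists>q \<in> {[1, 1, 1], [Bd, Cd, Bd, Cd], [Bd, 0, Bd, 0], [Cd, 0, Cd, 0], [0, 0, 0, 0],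
            [Bd, Bd, Bd, Bd, Bd, Bd], [Cd, Cd, Cd, Cd, Cd, Cd]}. \<exists>k. c = rotate k q)"
    (is "_ \<longleftrightarrow> (\<exists>q \<in> ?Q. _)")
proof -
  have "?Q \<subseteq> D_irreducibles" by (auto simp: D_irreducibles_def)
  moreover have "\<forall>z \<in> D_irreducibles. \<exists>q \<in> ?Q. z = rotate 0 q \<or> z = rotate 1 q"
    by (simp add: D_irreducibles_def)
  ultimately have "(\<exists>q \<in> ?Q. \<exists>k. c = rotate k q) \<longleftrightarrow> c \<in> D_irreducibles"
    using rotate_in_D_irreducibles by blast
  then show ?thesis
    using D_irreducibles_of_irreducible_q irreducible_q_D_irreducibles by blast
qed

end
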